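(* Let $n=2p_1^{J_1}\cdots p_s^{J_s}$, where $s\ge2$, the $p_i$ are distinct odd primes, $J_i\ge1$, and $\prod_{i=1}^r p_i^{J_i}<p_{r+1}$ for every $r\in\{1,\dots,s-1\}$. Let $\mathcal{D}_1,\mathcal{D}_2$ be sets of positive divisors of $n$ such that (1) $\sum_{d\in\mathcal{D}_1,\,d\text{ odd}}\phi(n/d)=\sum_{d\in\mathcal{D}_2,\,d\text{ odd}}\phi(n/d)$, and (2) $\sum_{d\in\mathcal{D}_1,\,d\text{ even}}\phi(n/d)=\sum_{d\in\mathcal{D}_2,\,d\text{ even}}\phi(n/d)$. Then $\mathcal{D}_1=\mathcal{D}_2$.
   Context: $\phi$ is Euler's totient function. *)

theory Defs
  imports "HOL-Number_Theory.Number_Theory"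
begin

end

theory Submission
  imports Defs
begin

text \<open>Write \<open>n = 2 m\<close>. The maps \<open>d \<mapsto> m/d\<close> on odd divisors and \<open>d \<mapsto> n/d\<close> on even divisors
  of \<open>n\<close> land in the divisors of \<open>m\<close> and turn both hypotheses into equalities of sums
  \<open>\<Sum> \<phi>(e)\<close> over sets of divisors of \<open>m\<close>. So it suffices that a set of divisors of \<open>m\<close> is
  determined by its totient sum. This is built up one prime power at a time: the totient sum of
  a set of divisors of \<open>Q p\<^sup>J\<close> is \<open>\<Sum>\<^sub>j \<phi>(p\<^sup>j) x\<^sub>j\<close>, where \<open>x\<^sub>j \<le> Q\<close> is the totient sum of the divisors
  of \<open>Q\<close> in layer \<open>j\<close>; when \<open>Q < p - 1\<close> the weights \<open>\<phi>(p\<^sup>j)\<close> are superincreasing, so the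
  \<open>x\<^sub>j\<close>, and then by induction the layers themselves, are determined.\<close>

lemma weighted_sum_lt_next_weight:
  fixes w x :: "nat \<Rightarrow> nat"
  assumes "\<forall>j<k. x j \<le> c" and "c * (\<Sum>j<k. w j) < w k"
  shows "(\<Sum>j<k. w j * x j) < w k"
proof -
  have "(\<Sum>j<k. w j * x j) \<le> (\<Sum>j<k. w j * c)"
    using assms(1) by (intro sum_mono) auto
  also have "\<dots> = c * (\<Sum>j<k. w j)"
    by (simp add: sum_distrib_left mult.commute)
  finally show ?thesis using assms(2) by linarith
qed

lemma superincreasing_digits_unique:
  fixes w x y :: "nat \<Rightarrow> nat"
  assumes "\<forall>k\<le>K. c * (\<Sum>j<k. w j) < w k"
    and "\<forall>j\<le>K. x j \<le> c" and "\<forall>j\<le>K. y j \<le> c"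
    and "(\<Sum>j\<le>K. w j * x j) = (\<Sum>j\<le>K. w j * y j)"
  shows "\<forall>j\<le>K. x j = y j"
  using assms
proof (induction K)
  case 0
  then show ?case by auto
next
  case (Suc K)
  have low_x: "(\<Sum>j<Suc K. w j * x j) < w (Suc K)"
    using Suc.prems(1,2) by (intro weighted_sum_lt_next_weight) auto
  have low_y: "(\<Sum>j<Suc K. w j * y j) < w (Suc K)"
    using Suc.prems(1,3) by (intro weighted_sum_lt_next_weight) auto
  have split: "(\<Sum>j<Suc K. w j * x j) + w (Suc K) * x (Suc K)
      = (\<Sum>j<Suc K. w j * y j) + w (Suc K) * y (Suc K)"
    using Suc.prems(4) by (simp add: lessThan_Suc_atMost)
  have top: "x (Suc K) = y (Suc K)"
    using arg_cong[OF split, of "\<lambda>t. t div w (Suc K)"] low_x low_y by simp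
  with split have "(\<Sum>j\<le>K. w j * x j) = (\<Sum>j\<le>K. w j * y j)"
    by (simp add: lessThan_Suc_atMost)
  with Suc.prems have "\<forall>j\<le>K. x j = y j"
    by (intro Suc.IH) auto
  with top show ?case
    by (auto simp: le_Suc_eq)
qed

lemma sum_totient_prime_powers:
  assumes "prime (p::nat)"
  shows "(\<Sum>j\<le>k. totient (p ^ j)) = p ^ k"
proof (induction k)
  case 0
  then show ?case by simp
next
  case (Suc k)
  have "p \<ge> 1"
    using assms prime_ge_1_nat by blast
  have "(\<Sum>j\<le>Suc k. totient (p ^ j)) = p ^ k + p ^ k * (p - 1)"
    using Suc totient_prime_power_Suc[OF assms, of k] by simp
  also have "\<dots> = p ^ Suc k"
    using \<open>p \<ge> 1\<close> by (simp add: algebra_simps)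
  finally show ?case .
qed

lemma totient_prime_powers_superincreasing:
  assumes "prime (p::nat)" and "c < p - 1"
  shows "c * (\<Sum>j<k. totient (p ^ j)) < totient (p ^ k)"
proof (cases k)
  case 0
  then show ?thesis by simp
next
  case (Suc k')
  have "c * (\<Sum>j<k. totient (p ^ j)) = c * p ^ k'"
    using sum_totient_prime_powers[OF assms(1)] Suc by (simp add: lessThan_Suc_atMost)
  also have "\<dots> < (p - 1) * p ^ k'"
    using assms prime_gt_0_nat by simp
  finally show ?thesis
    using Suc totient_prime_power_Suc[OF assms(1)] by (simp add: mult.commute)
qed

lemma dvd_mult_prime_power_decomp:
  assumes "prime (p::nat)" and "d dvd Q * p ^ J"
  obtains e j where "e dvd Q" and "j \<le> J" and "d = e * p ^ j"
proof -
  obtain e c where "d = e * c" "e dvd Q" "c dvd p ^ J"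
    using division_decomp[OF assms(2)] by blast
  moreover obtain j where "j \<le> J" "c = p ^ j"
    using \<open>c dvd p ^ J\<close> divides_primepow_nat[OF assms(1)] by blast
  ultimately show ?thesis using that by blast
qed

lemma mult_prime_power_eq_imp_eq:
  assumes p: "prime (p::nat)" and "\<not> p dvd e1" and "\<not> p dvd e2"
    and eq: "e1 * p ^ j1 = e2 * p ^ j2"
  shows "j1 = j2" and "e1 = e2"
proof -
  have multiplicity: "multiplicity p (e * p ^ j) = j" if "\<not> p dvd e" for e j
  proof -
    have "e \<noteq> 0" using that by (metis dvd_0_right)
    with p that show ?thesis
      by (simp add: prime_elem_multiplicity_mult_distrib not_dvd_imp_multiplicity_0)
  qed
  show "j1 = j2"
    using arg_cong[OF eq, of "multiplicity p"] multiplicity assms(2,3) by simp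
  with eq p show "e1 = e2"
    by (simp add: prime_gt_0_nat)
qed

text \<open>For \<open>p \<nmid> Q\<close>: the elements of \<open>A\<close> whose \<open>p\<close>-part is exactly \<open>p ^ j\<close>, with that factor removed.\<close>
definition layer :: "nat \<Rightarrow> nat \<Rightarrow> nat set \<Rightarrow> nat \<Rightarrow> nat set" where
  "layer Q p A j = {e. e dvd Q \<and> e * p ^ j \<in> A}"

lemma sum_totient_by_layers:
  assumes p: "prime (p::nat)" and "\<not> p dvd Q" and "Q > 0"
    and A: "A \<subseteq> {d. d dvd Q * p ^ J}"
  shows "(\<Sum>d\<in>A. totient d) = (\<Sum>j\<le>J. totient (p ^ j) * (\<Sum>e\<in>layer Q p A j. totient e))"
proof -
  have coprime: "\<not> p dvd e" if "e dvd Q" for e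
    using that assms(2) dvd_trans by blast
  have finite: "finite (layer Q p A j)" for j
    by (rule finite_subset[of _ "{e. e dvd Q}"]) (use \<open>Q > 0\<close> in \<open>auto simp: layer_def\<close>)
  have "bij_betw (\<lambda>(j, e). e * p ^ j) (SIGMA j:{..J}. layer Q p A j) A"
  proof (rule bij_betwI')
    fix x y assume "x \<in> (SIGMA j:{..J}. layer Q p A j)" "y \<in> (SIGMA j:{..J}. layer Q p A j)"
    moreover obtain j1 e1 j2 e2 where "x = (j1, e1)" "y = (j2, e2)"
      by fastforce
    ultimately have "\<not> p dvd e1" "\<not> p dvd e2"
      using coprime by (auto simp: layer_def)
    then show "((\<lambda>(j, e). e * p ^ j) x = (\<lambda>(j, e). e * p ^ j) y) = (x = y)"
      using mult_prime_power_eq_imp_eq[OF p, of e1 e2 j1 j2] \<open>x = (j1, e1)\<close> \<open>y = (j2, e2)\<close>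
      by auto
  next
    fix x assume "x \<in> (SIGMA j:{..J}. layer Q p A j)"
    then show "(\<lambda>(j, e). e * p ^ j) x \<in> A"
      by (auto simp: layer_def)
  next
    fix d assume "d \<in> A"
    with A obtain e j where "e dvd Q" "j \<le> J" "d = e * p ^ j"
      using dvd_mult_prime_power_decomp[OF p] by blast
    with \<open>d \<in> A\<close> show "\<exists>x\<in>(SIGMA j:{..J}. layer Q p A j). d = (\<lambda>(j, e). e * p ^ j) x"
      by (intro bexI[of _ "(j, e)"]) (auto simp: layer_def)
  qed
  then have "(\<Sum>d\<in>A. totient d) = (\<Sum>(j, e)\<in>(SIGMA j:{..J}. layer Q p A j). totient (e * p ^ j))"
    by (simp add: sum.reindex_bij_betw[symmetric] case_prod_unfold)
  also have "\<dots> = (\<Sum>j\<le>J. \<Sum>e\<in>layer Q p A j. totient (e * p ^ j))"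
    using finite by (simp add: sum.Sigma)
  also have "\<dots> = (\<Sum>j\<le>J. totient (p ^ j) * (\<Sum>e\<in>layer Q p A j. totient e))"
  proof (intro sum.cong refl)
    fix j
    have "totient (e * p ^ j) = totient (p ^ j) * totient e" if "e \<in> layer Q p A j" for e
    proof -
      have "\<not> p dvd e"
        using that coprime by (simp add: layer_def)
      with p have "coprime e (p ^ j)"
        by (metis prime_imp_coprime coprime_commute coprime_power_right_iff)
      then show ?thesis by (simp add: totient_mult_coprime)
    qed
    then show "(\<Sum>e\<in>layer Q p A j. totient (e * p ^ j)) = totient (p ^ j) * (\<Sum>e\<in>layer Q p A j. totient e)"
      by (simp add: sum_distrib_left)
  qed
  finally show ?thesis .
qed

lemma subset_if_layers_subset:
  assumes p: "prime (p::nat)" and A: "A \<subseteq> {d. d dvd Q * p ^ J}"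
    and layers: "\<forall>j\<le>J. layer Q p A j \<subseteq> layer Q p B j"
  shows "A \<subseteq> B"
proof
  fix d assume "d \<in> A"
  with A obtain e j where "e dvd Q" "j \<le> J" "d = e * p ^ j"
    using dvd_mult_prime_power_decomp[OF p] by blast
  with \<open>d \<in> A\<close> have "e \<in> layer Q p B j"
    using layers by (auto simp: layer_def)
  with \<open>d = e * p ^ j\<close> show "d \<in> B"
    by (simp add: layer_def)
qed

definition totient_sum_injective :: "nat \<Rightarrow> bool" where
  "totient_sum_injective m \<longleftrightarrow> inj_on (sum totient) (Pow {d. d dvd m})"

lemma totient_sum_injective_1: "totient_sum_injective 1"
  by (auto simp: totient_sum_injective_def inj_on_def subset_singleton_iff)

lemma sum_totient_subset_divisors_le:
  assumes "(m::nat) > 0" and "A \<subseteq> {d. d dvd m}"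
  shows "sum totient A \<le> m"
proof -
  have "sum totient A \<le> (\<Sum>d | d dvd m. totient d)"
    using assms by (intro sum_mono2) auto
  then show ?thesis
    by (simp add: totient_divisor_sum)
qed

lemma totient_sum_injective_mult_prime_power:
  assumes p: "prime (p::nat)" and "\<not> p dvd Q" and "Q > 0" and small: "Q < p - 1"
    and inj: "totient_sum_injective Q"
  shows "totient_sum_injective (Q * p ^ J)"
  unfolding totient_sum_injective_def
proof (rule inj_onI)
  fix A B assume "A \<in> Pow {d. d dvd Q * p ^ J}" "B \<in> Pow {d. d dvd Q * p ^ J}"
    and eq: "sum totient A = sum totient B"
  then have A: "A \<subseteq> {d. d dvd Q * p ^ J}" and B: "B \<subseteq> {d. d dvd Q * p ^ J}"
    by auto
  have layer_divisors: "layer Q p X j \<subseteq> {d. d dvd Q}" for X j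
    by (auto simp: layer_def)
  have "\<forall>j\<le>J. sum totient (layer Q p A j) = sum totient (layer Q p B j)"
  proof (rule superincreasing_digits_unique[where c = Q and w = "\<lambda>j. totient (p ^ j)"])
    show "\<forall>k\<le>J. Q * (\<Sum>j<k. totient (p ^ j)) < totient (p ^ k)"
      using totient_prime_powers_superincreasing[OF p small] by blast
    show "\<forall>j\<le>J. sum totient (layer Q p A j) \<le> Q" "\<forall>j\<le>J. sum totient (layer Q p B j) \<le> Q"
      using sum_totient_subset_divisors_le[OF \<open>Q > 0\<close> layer_divisors] by blast+
    show "(\<Sum>j\<le>J. totient (p ^ j) * sum totient (layer Q p A j))
        = (\<Sum>j\<le>J. totient (p ^ j) * sum totient (layer Q p B j))"
      using sum_totient_by_layers[OF p assms(2,3) A] sum_totient_by_layers[OF p assms(2,3) B] eq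
      by simp
  qed
  then have "\<forall>j\<le>J. layer Q p A j = layer Q p B j"
    using inj_onD[OF inj[unfolded totient_sum_injective_def]] layer_divisors by blast
  then show "A = B"
    using subset_if_layers_subset[OF p A, of B] subset_if_layers_subset[OF p B, of A] by auto
qed

lemma totient_sum_injective_prod_prime_powers:
  fixes p J :: "nat \<Rightarrow> nat"
  assumes "\<forall>i\<in>{1..s}. prime (p i)" and "inj_on p {1..s}"
    and "\<forall>r<s. (\<Prod>i=1..r. p i ^ J i) < p (Suc r) - 1"
  shows "totient_sum_injective (\<Prod>i=1..s. p i ^ J i)"
  using assms
proof (induction s)
  case 0
  then show ?case using totient_sum_injective_1 by simp
next
  case (Suc s)
  have prime: "prime (p (Suc s))"
    using Suc.prems(1) by simp
  have "\<not> p (Suc s) dvd (\<Prod>i=1..s. p i ^ J i)"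
  proof
    assume "p (Suc s) dvd (\<Prod>i=1..s. p i ^ J i)"
    then obtain i where i: "i \<in> {1..s}" "p (Suc s) dvd p i ^ J i"
      using prime by (auto simp: prime_dvd_prod_iff)
    then have "p (Suc s) dvd p i" and "prime (p i)"
      using Suc.prems(1) prime_dvd_power[OF prime] by auto
    then have "p (Suc s) = p i"
      using prime primes_dvd_imp_eq by blast
    with i Suc.prems(2) show False
      by (auto dest: inj_onD)
  qed
  moreover have "(\<Prod>i=1..s. p i ^ J i) > 0"
    using Suc.prems(1) by (auto intro!: prod_pos simp: prime_gt_0_nat)
  moreover have "totient_sum_injective (\<Prod>i=1..s. p i ^ J i)"
    using Suc.prems by (intro Suc.IH) (auto intro: inj_on_subset)
  ultimately show ?case
    using Suc.prems(3) by (simp add: prod.cl_ivl_Suc totient_sum_injective_mult_prime_power[OF prime])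
qed

lemma inj_on_div_divisors:
  assumes "(k::nat) > 0"
  shows "inj_on (\<lambda>d. k div d) {d. d dvd k}"
  by (rule inj_on_inverseI[where g = "\<lambda>d. k div d"]) (use assms in \<open>simp add: div_div_eq_right\<close>)

lemma eq_if_codivisor_totient_sums_eq:
  fixes k m :: nat
  assumes inj: "totient_sum_injective m" and "k > 0"
    and A: "A \<subseteq> {d. d dvd k}" and B: "B \<subseteq> {d. d dvd k}"
    and "(\<lambda>d. k div d) ` A \<subseteq> {e. e dvd m}" and "(\<lambda>d. k div d) ` B \<subseteq> {e. e dvd m}"
    and eq: "(\<Sum>d\<in>A. totient (k div d)) = (\<Sum>d\<in>B. totient (k div d))"
  shows "A = B"
proof -
  have inj_div: "inj_on (\<lambda>d. k div d) {d. d dvd k}"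
    using inj_on_div_divisors[OF \<open>k > 0\<close>] .
  have "sum totient ((\<lambda>d. k div d) ` A) = sum totient ((\<lambda>d. k div d) ` B)"
    using eq A B by (simp add: sum.reindex inj_on_subset[OF inj_div])
  then have "(\<lambda>d. k div d) ` A = (\<lambda>d. k div d) ` B"
    using inj_onD[OF inj[unfolded totient_sum_injective_def]] assms(5,6) by blast
  then show "A = B"
    using inj_on_image_eq_iff[OF inj_div A B] by blast
qed

lemma div_dvd_dividend: "(d::nat) dvd m \<Longrightarrow> m div d dvd m"
  by (metis dvd_div_mult_self dvd_triv_left)

lemma totient_double_div:
  assumes "odd (m::nat)" and "d dvd m"
  shows "totient (2 * m div d) = totient (m div d)"
proof -
  have "2 * m div d = 2 * (m div d)"
    using assms(2) by (simp add: div_mult_swap)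
  moreover have "odd (m div d)"
    using assms by (metis dvd_div_mult_self dvd_mult_left dvd_trans even_mult_iff)
  ultimately show ?thesis
    by (simp add: totient_double)
qed

lemma eq_if_odd_even_codivisor_totient_sums_eq:
  fixes m :: nat
  assumes "odd m" and inj: "totient_sum_injective m"
    and D1: "D1 \<subseteq> {d. d dvd 2 * m}" and D2: "D2 \<subseteq> {d. d dvd 2 * m}"
    and odd_eq: "(\<Sum>d\<in>{d\<in>D1. odd d}. totient (2 * m div d)) = (\<Sum>d\<in>{d\<in>D2. odd d}. totient (2 * m div d))"
    and even_eq: "(\<Sum>d\<in>{d\<in>D1. even d}. totient (2 * m div d)) = (\<Sum>d\<in>{d\<in>D2. even d}. totient (2 * m div d))"
  shows "D1 = D2"
proof -
  have "m > 0"
    using \<open>odd m\<close> by (simp add: odd_pos)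
  have odd_divisors: "{d\<in>D. odd d} \<subseteq> {d. d dvd m}" if "D \<subseteq> {d. d dvd 2 * m}" for D
    using that by (auto simp: coprime_dvd_mult_right_iff coprime_commute)
  have even_codivisors: "(\<lambda>d. 2 * m div d) ` {d\<in>D. even d} \<subseteq> {e. e dvd m}"
    if "D \<subseteq> {d. d dvd 2 * m}" for D
  proof clarify
    fix d assume "d \<in> D" "even d"
    then obtain b where "d = 2 * b"
      by (auto elim!: evenE)
    have "2 * b dvd 2 * m"
      using that \<open>d \<in> D\<close> \<open>d = 2 * b\<close> by blast
    then have "b dvd m"
      by simp
    then have "m div b dvd m"
      by (rule div_dvd_dividend)
    with \<open>d = 2 * b\<close> show "2 * m div d dvd m"
      by simp
  qed
  have "(\<Sum>d\<in>{d\<in>D. odd d}. totient (2 * m div d)) = (\<Sum>d\<in>{d\<in>D. odd d}. totient (m div d))"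
    if "D \<subseteq> {d. d dvd 2 * m}" for D
    using odd_divisors[OF that] \<open>odd m\<close> by (intro sum.cong) (auto simp: totient_double_div)
  with odd_eq D1 D2 odd_divisors[OF D1] odd_divisors[OF D2] have "{d\<in>D1. odd d} = {d\<in>D2. odd d}"
    by (intro eq_if_codivisor_totient_sums_eq[OF inj \<open>m > 0\<close>]) (auto intro: div_dvd_dividend)
  moreover have "{d\<in>D1. even d} = {d\<in>D2. even d}"
    using D1 D2 \<open>m > 0\<close> even_eq even_codivisors[OF D1] even_codivisors[OF D2]
    by (intro eq_if_codivisor_totient_sums_eq[OF inj]) auto
  ultimately show ?thesis
    by blast
qed

theorem lemma3p5:
  fixes s :: nat and p J :: "nat \<Rightarrow> nat" and n :: nat and D1 D2 :: "nat set"
  assumes s2: "s \<ge> 2"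
    and primes: "\<forall>i\<in>{1..s}. prime (p i) \<and> odd (p i)"
    and distinct: "inj_on p {1..s}"
    and Jpos: "\<forall>i\<in>{1..s}. J i \<ge> 1"
    and growth: "\<forall>r\<in>{1..s-1}. (\<Prod>i=1..r. p i ^ J i) < p (r + 1)"
    and n_def: "n = 2 * (\<Prod>i=1..s. p i ^ J i)"
    and D1: "D1 \<subseteq> {d. d > 0 \<and> d dvd n}"
    and D2: "D2 \<subseteq> {d. d > 0 \<and> d dvd n}"
    and odd_eq: "(\<Sum>d\<in>{d\<in>D1. odd d}. totient (n div d)) = (\<Sum>d\<in>{d\<in>D2. odd d}. totient (n div d))"
    and even_eq: "(\<Sum>d\<in>{d\<in>D1. even d}. totient (n div d)) = (\<Sum>d\<in>{d\<in>D2. even d}. totient (n div d))"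
  shows "D1 = D2"
proof -
  have odd_prod: "odd (\<Prod>i=1..r. p i ^ J i)" if "r \<le> s" for r
    using primes that by (auto simp: even_prod_iff)
  have "(\<Prod>i=1..r. p i ^ J i) < p (Suc r) - 1" if "r < s" for r
  proof -
    have "prime (p (Suc r))" and "odd (p (Suc r))"
      using primes that by auto
    then have "p (Suc r) \<ge> 3"
      using prime_ge_2_nat[of "p (Suc r)"] by (cases "p (Suc r) = 2") auto
    moreover have "(\<Prod>i=1..r. p i ^ J i) < p (Suc r)"
      using growth that \<open>p (Suc r) \<ge> 3\<close> by (cases "r = 0") auto
    ultimately show ?thesis
      using odd_prod[of r] \<open>odd (p (Suc r))\<close> that by (auto elim!: oddE)
  qed
  then have "totient_sum_injective (\<Prod>i=1..s. p i ^ J i)"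
    using primes distinct by (intro totient_sum_injective_prod_prime_powers) auto
  then show ?thesis
    using odd_prod[of s] D1 D2 odd_eq even_eq unfolding n_def
    by (intro eq_if_odd_even_codivisor_totient_sums_eq) auto
qed

end
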